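(* Let $\mathcal{T}$ be the law with tail function $\overline{F}(t)=e^{-t}$ for $t\in[0,1)\cup(2,\infty)$ and $\overline{F}(t)=e^{-2}$ for $t\in[1,2]$. Then $\overline{F}(u)\overline{F}(1)\leq\overline{F}(1+u)$ for all $u\in[0,\infty)$, yet for every $\epsilon\in(0,\tfrac12)$, with $r=\tfrac12+\epsilon$, one has $\mathcal{T}^{\delta_r}((1,\infty])>\mathcal{T}((1,\infty])$.
   Context: For a probability law $\mathcal{T}$ on $[0,\infty]$ and $r\in(0,\infty)$: let $(T_k)_{k\in\mathbb{N}}$ be i.i.d. with law $\mathcal{T}$; $\mathcal{T}^{\delta_r}$ is the law of the random time $\tilde T$ defined a.s. by $\tilde T=(k-1)r+T_k$ on $\{T_1>r,\ldots,T_{k-1}>r,T_k\leq r\}$, $k\in\mathbb{N}$ (deterministic reset with period $r$). The tail function is $\overline{F}(t)=\mathcal{T}((t,\infty])$. *)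

theory Defs
  imports "HOL-Probability.Probability"
begin

text \<open>Laws on [0,\<infinity>] are modelled as probability measures on the Borel sets of ennreal.
  The tail function of a law M is t \<mapsto> measure M {ennreal t<..} (the set (t,\<infinity>]).\<close>

definition tail :: "ennreal measure \<Rightarrow> real \<Rightarrow> real" where
  "tail M t = measure M {ennreal t<..}"

text \<open>Deterministic reset with period r applied to the i.i.d. sequence \<omega> (0-indexed):
  if \<omega> 0, ..., \<omega> (k-1) > r and \<omega> k \<le> r then the reset time is k*r + \<omega> k.
  On the (null) event that no \<omega> k is \<le> r the value is \<infinity> (arbitrary).\<close>

definition reset_time :: "real \<Rightarrow> (nat \<Rightarrow> ennreal) \<Rightarrow> ennreal" where
  "reset_time r \<omega> =
     (if \<exists>k. \<omega> k \<le> ennreal r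
      then (let k = (LEAST k. \<omega> k \<le> ennreal r) in ennreal (real k * r) + \<omega> k)
      else \<infinity>)"

definition reset_law :: "ennreal measure \<Rightarrow> real \<Rightarrow> ennreal measure" where
  "reset_law M r = distr (PiM UNIV (\<lambda>_::nat. M)) borel (reset_time r)"

definition example_tail :: "real \<Rightarrow> real" where
  "example_tail t = (if 1 \<le> t \<and> t \<le> 2 then exp (-2) else exp (-t))"

end

theory Submission
  imports Defs
begin

text \<open>The example tail is flat at \<open>exp (-2)\<close> on \<open>[1,2]\<close>, which makes it satisfy the
  new-worse-than-used inequality at \<open>1\<close>. Resetting with period \<open>r \<in> (1/2,1)\<close> nevertheless
  improves the tail at \<open>1\<close>: the reset time exceeds \<open>1\<close> as soon as the first attempt exceeds
  \<open>r\<close> and the second exceeds \<open>1 - r\<close>, an event of probability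
  \<open>exp (-r) * exp (-(1 - r)) = exp (-1) > exp (-2)\<close>.\<close>

lemma measurable_reset_time:
  assumes "sets M = sets borel"
  shows "reset_time r \<in> borel_measurable (PiM UNIV (\<lambda>_::nat. M))"
proof -
  define P where "P = PiM UNIV (\<lambda>_::nat. M)"
  have component: "(\<lambda>\<omega>. \<omega> k) \<in> borel_measurable P" for k
    using measurable_component_singleton[of k UNIV "\<lambda>_. M"] measurable_cong_sets[OF refl assms]
    unfolding P_def by blast
  then have below: "Measurable.pred P (\<lambda>\<omega>. \<omega> k \<le> ennreal r)" for k
    by measurable
  have first_below: "(\<lambda>\<omega>. LEAST k. \<omega> k \<le> ennreal r) \<in> measurable P (count_space UNIV)"
    by (rule measurable_Least) (rule below)
  have some_below: "Measurable.pred P (\<lambda>\<omega>. \<exists>k. \<omega> k \<le> ennreal r)"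
    by (rule pred_intros_countable) (rule below)
  have value_at: "(\<lambda>\<omega>. ennreal (real k * r) + \<omega> k) \<in> borel_measurable P" for k
    using component by measurable
  have "reset_time r \<in> borel_measurable P"
    unfolding reset_time_def Let_def
    by (rule measurable_If[OF measurable_compose_countable[OF value_at first_below] _
          some_below[unfolded pred_def]]) simp
  then show ?thesis
    unfolding P_def .
qed

lemma reset_time_gt:
  fixes r t :: real
  assumes "r \<le> t" "t < 2 * r" "\<omega> 0 > ennreal r" "\<omega> 1 > ennreal (t - r)"
  shows "reset_time r \<omega> > ennreal t"
proof (cases "\<exists>k. \<omega> k \<le> ennreal r")
  case True
  define k where "k = (LEAST k. \<omega> k \<le> ennreal r)"
  have \<omega>k: "\<omega> k \<le> ennreal r"
    unfolding k_def using True by (rule LeastI_ex)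
  have reset: "reset_time r \<omega> = ennreal (real k * r) + \<omega> k"
    using True by (simp add: reset_time_def k_def Let_def)
  have "k \<noteq> 0"
    using \<omega>k assms(3) by (metis not_le)
  then consider "k = 1" | "k \<ge> 2"
    by linarith
  then show ?thesis
  proof cases
    case 1
    have "ennreal t = ennreal r + ennreal (t - r)"
      using assms(1,2) by (simp add: ennreal_plus[symmetric])
    also have "\<dots> < ennreal r + \<omega> 1"
      using assms(4) \<omega>k 1 by (simp add: ennreal_add_left_cancel_less top.not_eq_extremum)
    finally show ?thesis
      using reset 1 by simp
  next
    case 2
    then have "t < real k * r"
      using assms(1,2) mult_right_mono[of 2 "real k" r] by linarith
    then have "ennreal t < ennreal (real k * r)"
      using assms(1,2) by (subst ennreal_less_iff) auto
    also have "\<dots> \<le> reset_time r \<omega>"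
      using reset by simp
    finally show ?thesis .
  qed
next
  case False
  then show ?thesis
    by (simp add: reset_time_def)
qed

lemma tail_reset_law_ge:
  fixes M :: "ennreal measure" and r t :: real
  assumes "prob_space M" "sets M = sets borel" "r \<le> t" "t < 2 * r"
  shows "tail M r * tail M (t - r) \<le> tail (reset_law M r) t"
proof -
  define P where "P = PiM UNIV (\<lambda>_::nat. M)"
  interpret product_prob_space "\<lambda>_::nat. M" UNIV
    by (simp add: product_prob_space_def product_prob_space_axioms_def product_sigma_finite_def
        assms(1) prob_space_imp_sigma_finite)
  interpret product: prob_space P
    unfolding P_def by (rule P.prob_space_axioms)
  interpret M: prob_space M
    by (rule assms(1))
  define X where "X i = (if i = 0 then {ennreal r<..} else {ennreal (t - r)<..})" for i :: nat
  define S where "S = {\<omega> \<in> space P. \<forall>i\<in>{0,1}. \<omega> i \<in> X i}"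
  have "emeasure P S = (\<Prod>i\<in>{0::nat,1}. emeasure M (X i))"
    unfolding S_def P_def using assms(2) by (intro emeasure_PiM_Collect) (auto simp: X_def)
  also have "\<dots> = ennreal (tail M r * tail M (t - r))"
    by (simp add: X_def tail_def M.emeasure_eq_measure ennreal_mult)
  finally have measure_S: "measure P S = tail M r * tail M (t - r)"
    by (simp add: product.emeasure_eq_measure tail_def)
  have measurable: "reset_time r \<in> borel_measurable P"
    unfolding P_def by (rule measurable_reset_time[OF assms(2)])
  have "measure P S \<le> measure P (reset_time r -` {ennreal t<..} \<inter> space P)"
  proof (rule product.finite_measure_mono)
    show "S \<subseteq> reset_time r -` {ennreal t<..} \<inter> space P"
      unfolding S_def X_def using reset_time_gt[OF assms(3,4)] by auto
    show "reset_time r -` {ennreal t<..} \<inter> space P \<in> sets P"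
      using measurable by measurable
  qed
  also have "\<dots> = tail (reset_law M r) t"
    unfolding tail_def reset_law_def P_def[symmetric]
    by (rule measure_distr[OF measurable, symmetric]) auto
  finally show ?thesis
    using measure_S by simp
qed

lemma example_tail_nwu_at_1:
  fixes u :: real
  assumes "u \<ge> 0"
  shows "example_tail u * example_tail 1 \<le> example_tail (1 + u)"
proof -
  have tail_1: "example_tail 1 = exp (-2)"
    by (simp add: example_tail_def)
  consider "u \<le> 1" | "1 < u" "u \<le> 2" | "2 < u"
    by linarith
  then show ?thesis
  proof cases
    case 1
    have "example_tail u \<le> 1"
      using assms by (auto simp: example_tail_def)
    then show ?thesis
      using 1 assms tail_1 by (simp add: example_tail_def mult_left_le_one_le)
  next
    case 2
    then show ?thesis
      by (simp add: example_tail_def mult_exp_exp)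
  next
    case 3
    then show ?thesis
      by (simp add: example_tail_def mult_exp_exp)
  qed
qed

theorem mainTheorem11:
  fixes M :: "ennreal measure"
  assumes "prob_space M"
    and "sets M = sets borel"
    and "\<And>t::real. t \<ge> 0 \<Longrightarrow> tail M t = example_tail t"
  shows "(\<forall>u::real. u \<ge> 0 \<longrightarrow> tail M u * tail M 1 \<le> tail M (1 + u))
    \<and> (\<forall>\<epsilon>::real. 0 < \<epsilon> \<and> \<epsilon> < 1/2 \<longrightarrow>
         tail (reset_law M (1/2 + \<epsilon>)) 1 > tail M 1)"
proof (intro conjI allI impI)
  fix u :: real
  assume "u \<ge> 0"
  then show "tail M u * tail M 1 \<le> tail M (1 + u)"
    using assms(3) example_tail_nwu_at_1 by simp
next
  fix \<epsilon> :: real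
  assume "0 < \<epsilon> \<and> \<epsilon> < 1/2"
  then have r: "1/2 < 1/2 + \<epsilon>" "1/2 + \<epsilon> < 1"
    by auto
  let ?r = "1/2 + \<epsilon>"
  have "tail M 1 = exp (-2)"
    using assms(3)[of 1] by (simp add: example_tail_def)
  also have "\<dots> < exp (-1)"
    by simp
  also have "\<dots> = tail M ?r * tail M (1 - ?r)"
    using r assms(3)[of ?r] assms(3)[of "1 - ?r"] by (simp add: example_tail_def mult_exp_exp)
  also have "\<dots> \<le> tail (reset_law M ?r) 1"
    using r by (intro tail_reset_law_ge[OF assms(1,2)]) auto
  finally show "tail (reset_law M ?r) 1 > tail M 1" .
qed

end
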